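(* For any graph $G$ with $N$ edges and any two distinct edges numbered $1,2$, the scheme $$\mathcal{V}(\Psi^{12}_G)\setminus\big(\mathcal{V}(\Psi^{12}_G)\cap\mathcal{V}(\Psi^{1,2}_G)\big)\subset\mathbb{P}^{N-3}=\mathbb{P}(\alpha_3:\dots:\alpha_N)$$ is smooth.
   Context: Dodgson polynomials: for a graph $G$ without self-loops, with edges $1,\dots,N$ and variables $\alpha_e$, orient the edges; for edge $e$ and vertex $v$ let $\varepsilon_{e,v}=1$ if $v$ is the source of $e$, $-1$ if the target, $0$ otherwise; let $\mathcal{E}_G$ be obtained from $(\varepsilon_{e,v})$ by deleting one column, $A=\mathrm{diag}(\alpha_1,\dots,\alpha_N)$, $M_G=\begin{pmatrix}A&\mathcal{E}_G\\-\mathcal{E}_G^T&0\end{pmatrix}$. For edge sets $I,J,K$ with $|I|=|J|$, $\Psi^{I,J}_{G,K}$ is the determinant of $M_G$ with rows $I$ and columns $J$ removed and $\alpha_e=0$ for $e\in K$ (up to sign); $\Psi^{I}_G:=\Psi^{I,I}_G$. Thus $\Psi^{12}_G=\Psi^{\{1,2\},\{1,2\}}_G$ and $\Psi^{1,2}_G=\Psi^{\{1\},\{2\}}_G$. $\mathcal{V}(\cdot)$ denotes the zero locus. *)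

theory Defs
  imports Complex_Main "Jordan_Normal_Form.Determinant" "Jordan_Normal_Form.DL_Submatrix"
begin

definition no_loop_graph :: "nat \<Rightarrow> nat \<Rightarrow> (nat \<Rightarrow> nat) \<Rightarrow> (nat \<Rightarrow> nat) \<Rightarrow> bool" where
  "no_loop_graph n N src tgt \<longleftrightarrow>
     (\<forall>e\<in>{1..N}. src e < n \<and> tgt e < n \<and> src e \<noteq> tgt e)"

definition eps :: "(nat \<Rightarrow> nat) \<Rightarrow> (nat \<Rightarrow> nat) \<Rightarrow> nat \<Rightarrow> nat \<Rightarrow> complex" where
  "eps src tgt e v = (if v = src e then 1 else if v = tgt e then -1 else 0)"

text \<open>The j-th remaining vertex after deleting the column of vertex d.\<close>
definition kept_vertex :: "nat \<Rightarrow> nat \<Rightarrow> nat" where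
  "kept_vertex d j = (if j < d then j else j + 1)"

text \<open>The matrix M_G (column of vertex d deleted from the incidence matrix).
  Index i < N stands for edge i+1; index N+j stands for vertex kept_vertex d j.\<close>
definition graph_matrix ::
  "nat \<Rightarrow> nat \<Rightarrow> (nat \<Rightarrow> nat) \<Rightarrow> (nat \<Rightarrow> nat) \<Rightarrow> nat \<Rightarrow> (nat \<Rightarrow> complex) \<Rightarrow> complex mat" where
  "graph_matrix n N src tgt d \<alpha> =
     mat (N + n - 1) (N + n - 1) (\<lambda>(i, k).
       if i < N \<and> k < N then (if i = k then \<alpha> (i + 1) else 0)
       else if i < N then eps src tgt (i + 1) (kept_vertex d (k - N))
       else if k < N then - eps src tgt (k + 1) (kept_vertex d (i - N))
       else 0)"

text \<open>Dodgson polynomial Psi^{I,J}_{G,K} evaluated at alpha (edge sets I, J, K),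
  as a function of alpha.\<close>
definition dodgson ::
  "nat \<Rightarrow> nat \<Rightarrow> (nat \<Rightarrow> nat) \<Rightarrow> (nat \<Rightarrow> nat) \<Rightarrow> nat \<Rightarrow> nat set \<Rightarrow> nat set \<Rightarrow> nat set
     \<Rightarrow> (nat \<Rightarrow> complex) \<Rightarrow> complex" where
  "dodgson n N src tgt d I J K \<alpha> =
     det (submatrix (graph_matrix n N src tgt d (\<lambda>e. if e \<in> K then 0 else \<alpha> e))
            (- ((\<lambda>e. e - 1) ` I)) (- ((\<lambda>e. e - 1) ` J)))"

definition partial :: "((nat \<Rightarrow> complex) \<Rightarrow> complex) \<Rightarrow> nat \<Rightarrow> (nat \<Rightarrow> complex) \<Rightarrow> complex" where
  "partial f e \<alpha> = (THE D. ((\<lambda>t. f (\<alpha>(e := t))) has_field_derivative D) (at (\<alpha> e)))"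

text \<open>Smoothness of the scheme V(f) \ (V(f) \<inter> V(g)) in P(alpha_3 : ... : alpha_N),
  for homogeneous polynomials f, g in alpha_3..alpha_N (Jacobian criterion over C):
  either f is the zero polynomial (so V(f) is all of projective space, which is smooth),
  or at every point of V(f) outside V(g) some partial derivative of f is nonzero.\<close>
definition smooth_hypersurface_minus :: "nat \<Rightarrow> ((nat \<Rightarrow> complex) \<Rightarrow> complex)
    \<Rightarrow> ((nat \<Rightarrow> complex) \<Rightarrow> complex) \<Rightarrow> bool" where
  "smooth_hypersurface_minus N f g \<longleftrightarrow>
     (\<forall>\<alpha>. f \<alpha> = 0) \<or>
     (\<forall>\<alpha>. (\<exists>e\<in>{3..N}. \<alpha> e \<noteq> 0) \<longrightarrow> f \<alpha> = 0 \<longrightarrow> g \<alpha> \<noteq> 0 \<longrightarrow>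
        (\<exists>e\<in>{3..N}. partial f e \<alpha> \<noteq> 0))"

end

theory Submission
  imports Defs
begin

text \<open>Write Psi^12(alpha) = det B(alpha), where B is M_G without the rows and columns of edges 1
  and 2. B is symmetric up to the signs +1 on edge and -1 on vertex indices, and alpha enters
  only its diagonal edge entries. Let alpha be a singular point of V(Psi^12) with Psi^12 not
  identically zero. A null vector x of B(alpha) has a nonzero entry x_r at some edge e, since
  otherwise it would be a null vector of every B(beta). The derivative of Psi^12 in alpha_e is
  the diagonal cofactor at r; its vanishing gives z, nonzero with z_r = 0, solving all equations
  of B(alpha) z = 0 but the r-th, which holds as well because the sign-twisted x is a left null
  vector. So the kernel of B(alpha) is at least two-dimensional and contains some nonzero w
  orthogonal to the row of edge 2; then (0, w) is a null vector of the matrix of Psi^{1,2}, so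
  Psi^{1,2}(alpha) = 0.\<close>

definition null_vector :: "nat \<Rightarrow> (nat \<Rightarrow> nat \<Rightarrow> 'a::field) \<Rightarrow> (nat \<Rightarrow> 'a) \<Rightarrow> bool" where
  "null_vector k F v \<longleftrightarrow> (\<exists>j<k. v j \<noteq> 0) \<and> (\<forall>i<k. (\<Sum>j<k. F i j * v j) = 0)"

lemma mult_mat_vec_mat_vec: "mat k k (\<lambda>(i,j). F i j) *\<^sub>v vec k v = vec k (\<lambda>i. \<Sum>j<k. F i j * v j)"
  by (auto simp: scalar_prod_def row_def lessThan_atLeast0 intro!: sum.cong)

lemma det_mat_eq_0_iff_null_vector:
  fixes F :: "nat \<Rightarrow> nat \<Rightarrow> 'a::field"
  shows "det (mat k k (\<lambda>(i,j). F i j)) = 0 \<longleftrightarrow> (\<exists>v. null_vector k F v)"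
proof -
  have vec_nonzero: "vec k v \<noteq> 0\<^sub>v k \<longleftrightarrow> (\<exists>j<k. v j \<noteq> 0)" for v :: "nat \<Rightarrow> 'a"
    by (auto simp: vec_eq_iff)
  have "det (mat k k (\<lambda>(i,j). F i j)) = 0 \<longleftrightarrow>
      (\<exists>v. vec k v \<noteq> 0\<^sub>v k \<and> mat k k (\<lambda>(i,j). F i j) *\<^sub>v vec k v = 0\<^sub>v k)"
    unfolding det_0_iff_vec_prod_zero_field[OF mat_carrier]
  proof safe
    fix w assume "w \<in> carrier_vec k" "w \<noteq> 0\<^sub>v k" "mat k k (\<lambda>(i,j). F i j) *\<^sub>v w = 0\<^sub>v k"
    moreover have "w = vec k (($) w)" using \<open>w \<in> carrier_vec k\<close> by auto
    ultimately show "\<exists>v. vec k v \<noteq> 0\<^sub>v k \<and> mat k k (\<lambda>(i,j). F i j) *\<^sub>v vec k v = 0\<^sub>v k"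
      by metis
  qed (use vec_carrier in blast)
  then show ?thesis
    by (simp add: null_vector_def vec_nonzero mult_mat_vec_mat_vec vec_eq_iff)
qed

lemma det_mat_affine_row:
  fixes G :: "nat \<Rightarrow> nat \<Rightarrow> 'a::comm_ring_1"
  assumes "r < k"
  shows "det (mat k k (\<lambda>(i,j). if i = r then a j + t * b j else G i j)) =
    det (mat k k (\<lambda>(i,j). if i = r then a j else G i j)) +
    t * det (mat k k (\<lambda>(i,j). if i = r then b j else G i j))"
proof -
  have expand_row: "det (mat k k (\<lambda>(i,j). if i = r then c j else G i j)) =
      (\<Sum>p | p permutes {0..<k}. signof p * c (p r) * (\<Prod>i \<in> {0..<k} - {r}. G i (p i)))"
    for c :: "nat \<Rightarrow> 'a"
  proof -
    have "(\<Prod>i = 0..<k. mat k k (\<lambda>(i,j). if i = r then c j else G i j) $$ (i, p i)) =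
        c (p r) * (\<Prod>i \<in> {0..<k} - {r}. G i (p i))" if "p permutes {0..<k}" for p
      using assms permutes_in_image[OF that] by (subst prod.remove[of _ r]) (auto intro!: prod.cong)
    then show ?thesis
      by (simp add: det_def'[where n = k] mult.assoc)
  qed
  show ?thesis
    unfolding expand_row by (simp add: sum_distrib_left sum.distrib[symmetric] algebra_simps)
qed

text \<open>The twisted vector \<open>(s\<^sub>i x\<^sub>i)\<close> is a left null vector of \<open>F\<close>, and it pairs with \<open>F z\<close> only
  in the row \<open>r\<close>.\<close>

lemma signed_symmetric_null_row:
  fixes F :: "nat \<Rightarrow> nat \<Rightarrow> 'a::field"
  assumes sym: "\<And>i j. i < k \<Longrightarrow> j < k \<Longrightarrow> F i j = s i * s j * F j i"
    and sign: "\<And>i. i < k \<Longrightarrow> s i * s i = 1"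
    and x: "\<And>i. i < k \<Longrightarrow> (\<Sum>j<k. F i j * x j) = 0"
    and r: "r < k" "x r \<noteq> 0"
    and z: "\<And>i. i < k \<Longrightarrow> i \<noteq> r \<Longrightarrow> (\<Sum>j<k. F i j * z j) = 0"
  shows "(\<Sum>j<k. F r j * z j) = 0"
proof -
  have left_null: "(\<Sum>i<k. s i * x i * F i j) = 0" if "j < k" for j
  proof -
    have "(\<Sum>i<k. s i * x i * F i j) = (\<Sum>i<k. s j * (F j i * x i))"
    proof (rule sum.cong[OF refl])
      fix i assume "i \<in> {..<k}"
      then have "s i * x i * F i j = (s i * s i) * (s j * (F j i * x i))"
        using \<open>j < k\<close> by (subst sym[of i j]) (simp_all add: mult_ac)
      also have "\<dots> = s j * (F j i * x i)"
        using sign \<open>i \<in> {..<k}\<close> by simp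
      finally show "s i * x i * F i j = s j * (F j i * x i)" .
    qed
    then show ?thesis using x[OF that] by (simp add: sum_distrib_left[symmetric])
  qed
  have "0 = (\<Sum>j<k. (\<Sum>i<k. s i * x i * F i j) * z j)"
    using left_null by simp
  also have "\<dots> = (\<Sum>j<k. \<Sum>i<k. s i * x i * F i j * z j)"
    by (simp add: sum_distrib_right)
  also have "\<dots> = (\<Sum>i<k. \<Sum>j<k. s i * x i * F i j * z j)"
    by (rule sum.swap)
  also have "\<dots> = (\<Sum>i<k. s i * x i * (\<Sum>j<k. F i j * z j))"
    by (simp add: sum_distrib_left mult.assoc)
  also have "\<dots> = s r * x r * (\<Sum>j<k. F r j * z j)"
    using r(1) z by (subst sum.remove[of _ r]) auto
  finally show ?thesis
    using sign[OF r(1)] r(2) by auto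
qed

lemma null_vector_in_hyperplane:
  fixes F :: "nat \<Rightarrow> nat \<Rightarrow> 'a::field"
  assumes x: "null_vector k F x" and z: "null_vector k F z"
    and r: "r < k" "x r \<noteq> 0" "z r = 0"
  shows "\<exists>w. null_vector k F w \<and> (\<Sum>j<k. u j * w j) = 0"
proof -
  define a where "a = (\<Sum>j<k. u j * z j)"
  define b where "b = (\<Sum>j<k. u j * x j)"
  define w where "w = (\<lambda>j. a * x j - b * z j)"
  have linear: "(\<Sum>j<k. c j * w j) = a * (\<Sum>j<k. c j * x j) - b * (\<Sum>j<k. c j * z j)" for c
    by (simp add: w_def algebra_simps sum_subtractf sum_distrib_left)
  have w_null: "\<forall>i<k. (\<Sum>j<k. F i j * w j) = 0"
    using x z by (simp add: linear null_vector_def)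
  have w_perp: "(\<Sum>j<k. u j * w j) = 0"
    by (simp add: linear flip: a_def b_def)
  show ?thesis
  proof (cases "\<exists>j<k. w j \<noteq> 0")
    case True
    then show ?thesis using w_null w_perp unfolding null_vector_def by blast
  next
    case False
    obtain j where j: "j < k" "z j \<noteq> 0" using z unfolding null_vector_def by blast
    have "a = 0" using False r by (auto simp: w_def)
    then have "b = 0" using False j by (auto simp: w_def)
    then show ?thesis using x unfolding b_def by blast
  qed
qed

lemma pick_Compl_lessThan: "pick (- {..<m}) i = i + m"
  by (induction i) (auto intro!: Least_equality)

lemma pick_Compl_singleton: "pick (- {m}) i = (if i < m then i else Suc i)"
  by (induction i) (auto intro!: Least_equality)

lemma card_less_Compl_lessThan: "card {i. i < n \<and> i \<in> - {..<m}} = n - m"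
proof -
  have "{i. i < n \<and> i \<in> - {..<m}} = {m..<n}" by auto
  then show ?thesis by simp
qed

lemma card_less_Compl_singleton:
  assumes "m < n"
  shows "card {i. i < n \<and> i \<in> - {m}} = n - 1"
proof -
  have "{i. i < n \<and> i \<in> - {m}} = {..<n} - {m}" by auto
  then show ?thesis using assms by simp
qed

lemma submatrix_mat:
  "submatrix (mat m n f) I J =
     mat (card {i. i < m \<and> i \<in> I}) (card {j. j < n \<and> j \<in> J}) (\<lambda>(i,j). f (pick I i, pick J j))"
  by (rule eq_matI) (auto simp: submatrix_index dim_submatrix pick_le)

lemma partial_eq_if_affine:
  assumes "\<And>t. f (\<alpha>(e := t)) = c0 + t * c1"
  shows "partial f e \<alpha> = c1"
proof -
  have deriv: "((\<lambda>t. c0 + t * c1) has_field_derivative c1) (at x)" for x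
    by (auto intro!: derivative_eq_intros)
  show ?thesis
    unfolding partial_def assms using deriv DERIV_unique by blast
qed

definition graph_entry ::
  "nat \<Rightarrow> (nat \<Rightarrow> nat) \<Rightarrow> (nat \<Rightarrow> nat) \<Rightarrow> nat \<Rightarrow> (nat \<Rightarrow> complex) \<Rightarrow> nat \<Rightarrow> nat \<Rightarrow> complex" where
  "graph_entry N src tgt d \<alpha> i k =
     (if i < N \<and> k < N then (if i = k then \<alpha> (i + 1) else 0)
      else if i < N then eps src tgt (i + 1) (kept_vertex d (k - N))
      else if k < N then - eps src tgt (k + 1) (kept_vertex d (i - N))
      else 0)"

text \<open>Index \<open>i\<close> of the minor is index \<open>i + 2\<close> of \<open>M\<^sub>G\<close>: for \<open>i < N - 2\<close> it is edge \<open>i + 3\<close>,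
  otherwise a vertex.\<close>

definition minor12_entry ::
  "nat \<Rightarrow> (nat \<Rightarrow> nat) \<Rightarrow> (nat \<Rightarrow> nat) \<Rightarrow> nat \<Rightarrow> (nat \<Rightarrow> complex) \<Rightarrow> nat \<Rightarrow> nat \<Rightarrow> complex" where
  "minor12_entry N src tgt d \<alpha> i k = graph_entry N src tgt d \<alpha> (i + 2) (k + 2)"

lemma graph_matrix_eq_mat_graph_entry:
  "graph_matrix n N src tgt d \<alpha> = mat (N + n - 1) (N + n - 1) (\<lambda>(i,k). graph_entry N src tgt d \<alpha> i k)"
  unfolding graph_matrix_def graph_entry_def by simp

lemma graph_entry_signed_symmetric:
  "graph_entry N src tgt d \<alpha> i k =
     (if i < N then 1 else -1) * (if k < N then 1 else -1) * graph_entry N src tgt d \<alpha> k i"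
  by (simp add: graph_entry_def)

lemma graph_entry_vertex_column:
  "N \<le> k \<Longrightarrow> graph_entry N src tgt d \<alpha> i k = graph_entry N src tgt d \<beta> i k"
  by (simp add: graph_entry_def)

lemma graph_entry_fun_upd:
  "0 < e \<Longrightarrow> e \<le> N \<Longrightarrow> graph_entry N src tgt d (\<alpha>(e := t)) i k =
     (if i = e - 1 \<and> k = e - 1 then t else graph_entry N src tgt d \<alpha> i k)"
  by (auto simp: graph_entry_def)

lemma dodgson_12_12_eq_det_minor12:
  "dodgson n N src tgt d {1,2} {1,2} {} \<alpha> =
     det (mat (N + n - 3) (N + n - 3) (\<lambda>(i,k). minor12_entry N src tgt d \<alpha> i k))"
proof -
  have deleted: "(\<lambda>e. e - 1) ` {1,2::nat} = {..<2}" by auto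
  show ?thesis
    unfolding dodgson_def deleted graph_matrix_eq_mat_graph_entry submatrix_mat card_less_Compl_lessThan
      pick_Compl_lessThan
    by (simp add: minor12_entry_def numeral_3_eq_3)
qed

lemma dodgson_1_2_eq_det:
  assumes "3 \<le> N + n"
  shows "dodgson n N src tgt d {1} {2} {} \<alpha> =
     det (mat (N + n - 2) (N + n - 2)
       (\<lambda>(i,k). graph_entry N src tgt d \<alpha> (Suc i) (if k = 0 then 0 else Suc k)))"
proof -
  have deleted: "(\<lambda>e. e - 1) ` {1::nat} = {0}" "(\<lambda>e. e - 1) ` {2::nat} = {1}" by auto
  have card: "card {i. i < N + n - 1 \<and> i \<in> - {0}} = N + n - 2"
    "card {i. i < N + n - 1 \<and> i \<in> - {1}} = N + n - 2"
    using assms by (subst card_less_Compl_singleton; simp)+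
  show ?thesis
    unfolding dodgson_def deleted graph_matrix_eq_mat_graph_entry submatrix_mat pick_Compl_singleton
      card
    by (intro arg_cong[where f = det] eq_matI) auto
qed

lemma partial_dodgson_12_12:
  assumes "e \<in> {3..N}" "0 < n"
  shows "partial (dodgson n N src tgt d {1,2} {1,2} {}) e \<alpha> =
    det (mat (N + n - 3) (N + n - 3) (\<lambda>(i,k).
      if i = e - 3 then (if k = e - 3 then 1 else 0) else minor12_entry N src tgt d \<alpha> i k))"
proof -
  define r where "r = e - 3"
  define a where "a = (\<lambda>k. if k = r then 0 else minor12_entry N src tgt d \<alpha> r k)"
  define b :: "nat \<Rightarrow> complex" where "b = (\<lambda>k. if k = r then 1 else 0)"
  have "r < N + n - 3"
    using assms unfolding r_def by auto
  have "mat (N + n - 3) (N + n - 3) (\<lambda>(i,k). minor12_entry N src tgt d (\<alpha>(e := t)) i k) =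
      mat (N + n - 3) (N + n - 3) (\<lambda>(i,k). if i = r then a k + t * b k else minor12_entry N src tgt d \<alpha> i k)"
    for t
    using assms(1) by (intro eq_matI) (auto simp: minor12_entry_def graph_entry_fun_upd a_def b_def r_def)
  then have "dodgson n N src tgt d {1,2} {1,2} {} (\<alpha>(e := t)) =
      det (mat (N + n - 3) (N + n - 3) (\<lambda>(i,k). if i = r then a k else minor12_entry N src tgt d \<alpha> i k)) +
      t * det (mat (N + n - 3) (N + n - 3) (\<lambda>(i,k). if i = r then b k else minor12_entry N src tgt d \<alpha> i k))"
    for t
    using \<open>r < N + n - 3\<close> unfolding dodgson_12_12_eq_det_minor12 by (simp add: det_mat_affine_row)
  then show ?thesis
    unfolding b_def r_def by (rule partial_eq_if_affine)
qed

text \<open>The vertex columns do not depend on \<alpha>, so a null vector supported on them would be a null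
  vector for every \<beta>.\<close>

lemma null_vector_minor12_has_edge_entry:
  assumes "dodgson n N src tgt d {1,2} {1,2} {} \<beta> \<noteq> 0"
    and x: "null_vector (N + n - 3) (minor12_entry N src tgt d \<alpha>) x"
  shows "\<exists>r < N - 2. x r \<noteq> 0"
proof (rule ccontr)
  assume "\<not> ?thesis"
  then have same: "minor12_entry N src tgt d \<beta> i k * x k = minor12_entry N src tgt d \<alpha> i k * x k"
    for i k
    unfolding minor12_entry_def
    by (cases "k < N - 2") (auto intro: graph_entry_vertex_column)
  have "null_vector (N + n - 3) (minor12_entry N src tgt d \<beta>) x"
    using x unfolding null_vector_def same .
  then have "det (mat (N + n - 3) (N + n - 3) (\<lambda>(i,k). minor12_entry N src tgt d \<beta> i k)) = 0"
    unfolding det_mat_eq_0_iff_null_vector by (rule exI[of _ x])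
  with assms(1) show False
    unfolding dodgson_12_12_eq_det_minor12 by contradiction
qed

lemma critical_point_null_vector:
  assumes "partial (dodgson n N src tgt d {1,2} {1,2} {}) (r + 3) \<alpha> = 0"
    and x: "null_vector (N + n - 3) (minor12_entry N src tgt d \<alpha>) x"
    and r: "r < N - 2" "x r \<noteq> 0" and "0 < n"
  shows "\<exists>z. null_vector (N + n - 3) (minor12_entry N src tgt d \<alpha>) z \<and> z r = 0"
proof -
  let ?K = "N + n - 3"
  let ?M = "\<lambda>i k. if i = r then (if k = r then 1 else 0) else minor12_entry N src tgt d \<alpha> i k"
  have "r + 3 \<in> {3..N}" "r < ?K"
    using r \<open>0 < n\<close> by auto
  have "det (mat ?K ?K (\<lambda>(i,k). ?M i k)) = 0"
    using assms(1)
    unfolding partial_dodgson_12_12[OF \<open>r + 3 \<in> {3..N}\<close> \<open>0 < n\<close>] add_diff_cancel_right' .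
  then have "\<exists>z. null_vector ?K ?M z"
    unfolding det_mat_eq_0_iff_null_vector .
  then obtain z where z: "null_vector ?K ?M z" ..
  then have rows: "(\<Sum>k<?K. ?M i k * z k) = 0" if "i < ?K" for i
    using that unfolding null_vector_def by blast
  have "z r = 0"
    using rows[OF \<open>r < ?K\<close>] \<open>r < ?K\<close>
    by (simp add: if_distrib[of "\<lambda>c. c * z _"] cong: if_cong)
  have other_rows: "(\<Sum>k<?K. minor12_entry N src tgt d \<alpha> i k * z k) = 0" if "i < ?K" "i \<noteq> r" for i
    using rows[OF that(1)] that(2) by simp
  have "(\<Sum>k<?K. minor12_entry N src tgt d \<alpha> r k * z k) = 0"
  proof (rule signed_symmetric_null_row[where s = "\<lambda>i. if i < N - 2 then 1 else -1"])
    show "minor12_entry N src tgt d \<alpha> i k =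
        (if i < N - 2 then 1 else -1) * (if k < N - 2 then 1 else -1) * minor12_entry N src tgt d \<alpha> k i"
      for i k
      unfolding minor12_entry_def graph_entry_signed_symmetric[of N src tgt d \<alpha> "i + 2"] by auto
  qed (use x r \<open>r < ?K\<close> other_rows in \<open>simp_all add: null_vector_def\<close>)
  with other_rows have "\<forall>i<?K. (\<Sum>k<?K. minor12_entry N src tgt d \<alpha> i k * z k) = 0"
    by blast
  moreover have "\<exists>k<?K. z k \<noteq> 0"
    using z unfolding null_vector_def by blast
  ultimately show ?thesis
    using \<open>z r = 0\<close> unfolding null_vector_def by blast
qed

lemma dodgson_1_2_eq_0_of_null_vector:
  assumes w: "null_vector (N + n - 3) (minor12_entry N src tgt d \<alpha>) w"
    and perp: "(\<Sum>k<N + n - 3. graph_entry N src tgt d \<alpha> 1 (k + 2) * w k) = 0"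
    and "3 \<le> N + n"
  shows "dodgson n N src tgt d {1} {2} {} \<alpha> = 0"
proof -
  let ?K = "N + n - 3"
  let ?G = "\<lambda>i k. graph_entry N src tgt d \<alpha> (Suc i) (if k = 0 then 0 else Suc k)"
  let ?w = "\<lambda>k. if k = 0 then 0 else w (k - 1)"
  have size: "N + n - 2 = Suc ?K"
    using \<open>3 \<le> N + n\<close> by simp
  have shift: "(\<Sum>k<Suc ?K. ?G i k * ?w k) = (\<Sum>k<?K. graph_entry N src tgt d \<alpha> (Suc i) (k + 2) * w k)"
    for i
    unfolding sum.lessThan_Suc_shift by simp
  have "(\<Sum>k<Suc ?K. ?G i k * ?w k) = 0" if "i < Suc ?K" for i
  proof (cases i)
    case 0
    then show ?thesis using perp unfolding shift by simp
  next
    case (Suc i')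
    then have "(\<Sum>k<?K. minor12_entry N src tgt d \<alpha> i' k * w k) = 0"
      using w that unfolding null_vector_def by simp
    then show ?thesis
      unfolding shift Suc minor12_entry_def by simp
  qed
  moreover obtain j where "j < ?K" "w j \<noteq> 0"
    using w unfolding null_vector_def by blast
  then have "\<exists>k<Suc ?K. ?w k \<noteq> 0"
    by (intro exI[of _ "Suc j"]) simp
  ultimately have "null_vector (N + n - 2) ?G ?w"
    unfolding null_vector_def size by blast
  then show ?thesis
    unfolding dodgson_1_2_eq_det[OF \<open>3 \<le> N + n\<close>] det_mat_eq_0_iff_null_vector
    by (rule exI[of _ ?w])
qed

lemma dodgson_1_2_eq_0_at_singular_point:
  assumes f_\<beta>: "dodgson n N src tgt d {1,2} {1,2} {} \<beta> \<noteq> 0"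
    and f_\<alpha>: "dodgson n N src tgt d {1,2} {1,2} {} \<alpha> = 0"
    and singular: "\<forall>e\<in>{3..N}. partial (dodgson n N src tgt d {1,2} {1,2} {}) e \<alpha> = 0"
    and "2 \<le> N" "0 < n"
  shows "dodgson n N src tgt d {1} {2} {} \<alpha> = 0"
proof -
  let ?K = "N + n - 3"
  have "\<exists>x. null_vector ?K (minor12_entry N src tgt d \<alpha>) x"
    using f_\<alpha> unfolding dodgson_12_12_eq_det_minor12 det_mat_eq_0_iff_null_vector .
  then obtain x where x: "null_vector ?K (minor12_entry N src tgt d \<alpha>) x" ..
  obtain r where r: "r < N - 2" "x r \<noteq> 0"
    using null_vector_minor12_has_edge_entry[OF f_\<beta> x] by blast
  then have "r < ?K" "r + 3 \<in> {3..N}"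
    using \<open>0 < n\<close> by auto
  then obtain z where z: "null_vector ?K (minor12_entry N src tgt d \<alpha>) z" "z r = 0"
    using critical_point_null_vector[OF _ x r \<open>0 < n\<close>] singular by blast
  obtain w where w: "null_vector ?K (minor12_entry N src tgt d \<alpha>) w"
    "(\<Sum>k<?K. graph_entry N src tgt d \<alpha> 1 (k + 2) * w k) = 0"
    using null_vector_in_hyperplane[OF x z(1) \<open>r < ?K\<close> r(2) z(2),
        of "\<lambda>k. graph_entry N src tgt d \<alpha> 1 (k + 2)"]
    by blast
  show ?thesis
    using dodgson_1_2_eq_0_of_null_vector[OF w] assms(4,5) by simp
qed

theorem corollary4p3:
  fixes n N d :: nat and src tgt :: "nat \<Rightarrow> nat"
  assumes "no_loop_graph n N src tgt"
    and "N \<ge> 2"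
    and "d < n"
  shows "smooth_hypersurface_minus N
           (dodgson n N src tgt d {1, 2} {1, 2} {})
           (dodgson n N src tgt d {1} {2} {})"
proof (cases "\<forall>\<alpha>. dodgson n N src tgt d {1, 2} {1, 2} {} \<alpha> = 0")
  case True
  then show ?thesis
    unfolding smooth_hypersurface_minus_def by (rule disjI1)
next
  case False
  then obtain \<beta> where "dodgson n N src tgt d {1, 2} {1, 2} {} \<beta> \<noteq> 0"
    by blast
  moreover have "0 < n"
    using \<open>d < n\<close> by simp
  ultimately show ?thesis
    unfolding smooth_hypersurface_minus_def
    using dodgson_1_2_eq_0_at_singular_point \<open>N \<ge> 2\<close> by blast
qed

end
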